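(* Let $\alpha\in\ell^2$. The following are equivalent: (i) $R_\alpha$ is bounded on $\ell^2$; (ii) $L([0,\infty))<\infty$; (iii) there exists $\epsilon>0$ such that the associated $(\epsilon,L)$-sequence has length $0$.
   Context: $\mathbb{N}=\{0,1,2,\dots\}$; $(R_\alpha f)(k)=\alpha_k\sum_{j=0}^kf(j)$. For a finite natural interval $I$: $\mu(I)=\sum_{k\in I}|\alpha_k|^2$, $\|f\|_{2,I}=(\sum_{k\in I}|f(k)|^2)^{1/2}$, $l(I,f)=\sum_{k\in I}\sum_{n\in I\setminus\{k\}}|\alpha_k\alpha_n\sum_{j=\min(k,n)+1}^{\max(k,n)}f(j)|^2$, $L(I)=(\sup_{\|f\|_{2,I}\le1}l(I,f)/\mu(I))^{1/2}$ (sup over $f$ supported in $I$; $L(I)=0$ if $\alpha$ vanishes on $I$). For infinite intervals, $L([a,\infty))=\lim_{b\to\infty}L([a,b])=\sup_{b\ge a}L([a,b])$. $(\epsilon,L)$-sequence: $c_0=0$, $c_{k+1}=\inf\{t\in\mathbb{N}:t>c_k,\ L([c_k,t-1])>\epsilon\}$ ($\inf\emptyset=+\infty$); it has length $N$ if $c_N<\infty$ and $c_{N+1}=+\infty$. *)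

theory Defs
  imports "HOL-Analysis.Analysis" "HOL-Library.Extended_Nat"
begin

definition Rop :: "(nat \<Rightarrow> complex) \<Rightarrow> (nat \<Rightarrow> complex) \<Rightarrow> nat \<Rightarrow> complex" where
  "Rop \<alpha> f k = \<alpha> k * (\<Sum>j\<le>k. f j)"

definition in_l2 :: "(nat \<Rightarrow> complex) \<Rightarrow> bool" where
  "in_l2 f \<longleftrightarrow> summable (\<lambda>k. (cmod (f k))\<^sup>2)"

definition l2norm :: "(nat \<Rightarrow> complex) \<Rightarrow> real" where
  "l2norm f = sqrt (\<Sum>k. (cmod (f k))\<^sup>2)"

definition Rop_bounded :: "(nat \<Rightarrow> complex) \<Rightarrow> bool" where
  "Rop_bounded \<alpha> \<longleftrightarrow> (\<exists>C. \<forall>f. in_l2 f \<longrightarrow>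
      in_l2 (Rop \<alpha> f) \<and> l2norm (Rop \<alpha> f) \<le> C * l2norm f)"

definition mu :: "(nat \<Rightarrow> complex) \<Rightarrow> nat \<Rightarrow> nat \<Rightarrow> real" where
  "mu \<alpha> a b = (\<Sum>k\<in>{a..b}. (cmod (\<alpha> k))\<^sup>2)"

definition norm2I :: "nat \<Rightarrow> nat \<Rightarrow> (nat \<Rightarrow> complex) \<Rightarrow> real" where
  "norm2I a b f = sqrt (\<Sum>k\<in>{a..b}. (cmod (f k))\<^sup>2)"

definition lI :: "(nat \<Rightarrow> complex) \<Rightarrow> nat \<Rightarrow> nat \<Rightarrow> (nat \<Rightarrow> complex) \<Rightarrow> real" where
  "lI \<alpha> a b f = (\<Sum>k\<in>{a..b}. \<Sum>n\<in>{a..b} - {k}.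
      (cmod (\<alpha> k * \<alpha> n * (\<Sum>j\<in>{min k n + 1..max k n}. f j)))\<^sup>2)"

text \<open>L([a,b]); defined as 0 when alpha vanishes on [a,b]. The supremum is over
  f supported in [a,b] with ||f||_{2,[a,b]} <= 1 (a bounded, nonempty set of reals).\<close>
definition Lfin :: "(nat \<Rightarrow> complex) \<Rightarrow> nat \<Rightarrow> nat \<Rightarrow> real" where
  "Lfin \<alpha> a b = (if (\<forall>k\<in>{a..b}. \<alpha> k = 0) then 0
     else sqrt (Sup {lI \<alpha> a b f / mu \<alpha> a b | f.
                       (\<forall>k. k \<notin> {a..b} \<longrightarrow> f k = 0) \<and> norm2I a b f \<le> 1}))"

definition Linf :: "(nat \<Rightarrow> complex) \<Rightarrow> nat \<Rightarrow> ereal" where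
  "Linf \<alpha> a = (SUP b\<in>{a..}. ereal (Lfin \<alpha> a b))"

primrec epsL_seq :: "(nat \<Rightarrow> complex) \<Rightarrow> real \<Rightarrow> nat \<Rightarrow> enat" where
  "epsL_seq \<alpha> \<epsilon> 0 = 0"
| "epsL_seq \<alpha> \<epsilon> (Suc k) =
     (case epsL_seq \<alpha> \<epsilon> k of
        \<infinity> \<Rightarrow> \<infinity>
      | enat c \<Rightarrow> (if (\<exists>t. t > c \<and> Lfin \<alpha> c (t - 1) > \<epsilon>)
                   then enat (LEAST t. t > c \<and> Lfin \<alpha> c (t - 1) > \<epsilon>)
                   else \<infinity>))"

definition epsL_length :: "(nat \<Rightarrow> complex) \<Rightarrow> real \<Rightarrow> nat \<Rightarrow> bool" where
  "epsL_length \<alpha> \<epsilon> N \<longleftrightarrow> epsL_seq \<alpha> \<epsilon> N < \<infinity> \<and> epsL_seq \<alpha> \<epsilon> (Suc N) = \<infinity>"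

end

theory Submission
  imports Defs
begin

text \<open>
  Write \<open>S k = f 0 + \<dots> + f k\<close>, so that \<open>(R\<^sub>\<alpha> f) k = \<alpha> k * S k\<close> and \<open>l(I,f)\<close> is the sum of
  \<open>|\<alpha> k|\<^sup>2 |\<alpha> n|\<^sup>2 |S k - S n|\<^sup>2\<close> over \<open>k \<noteq> n\<close> in \<open>I\<close>. Bounding
  \<open>|S k - S n|\<^sup>2 \<le> 2|S k|\<^sup>2 + 2|S n|\<^sup>2\<close> gives \<open>l(I,f) \<le> 4 \<mu>(I) \<parallel>R\<^sub>\<alpha> f\<parallel>\<^sup>2\<close>, so a bounded \<open>R\<^sub>\<alpha>\<close>
  bounds every \<open>L(I)\<close>. Conversely, fix \<open>m\<close> with \<open>\<alpha> m \<noteq> 0\<close>. The single row \<open>n = m\<close> of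
  \<open>l([0,b],f)\<close> bounds \<open>\<Sum>k\<le>b. |\<alpha> k|\<^sup>2 |S k - S m|\<^sup>2\<close> by \<open>L([0,b])\<^sup>2 \<mu>([0,b]) \<parallel>f\<parallel>\<^sup>2 / |\<alpha> m|\<^sup>2\<close>,
  and \<open>|S m|\<^sup>2 \<le> (m+1) \<parallel>f\<parallel>\<^sup>2\<close>; together they bound \<open>\<Sum>k\<le>b. |\<alpha> k * S k|\<^sup>2\<close> uniformly in \<open>b\<close>.
  Finally, the \<open>(\<epsilon>,L)\<close>-sequence has length \<open>0\<close> exactly when \<open>L([0,b]) \<le> \<epsilon>\<close> for every \<open>b\<close>.
\<close>

definition partial_sum :: "(nat \<Rightarrow> complex) \<Rightarrow> nat \<Rightarrow> complex" where
  "partial_sum f k = (\<Sum>j\<le>k. f j)"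

lemma Rop_eq_partial_sum: "Rop \<alpha> f k = \<alpha> k * partial_sum f k"
  by (simp add: Rop_def partial_sum_def)

lemma sum_between_eq_partial_sum_diff:
  assumes "m \<le> n"
  shows "(\<Sum>j\<in>{m+1..n}. f j) = partial_sum f n - partial_sum f m"
proof -
  have "{..n} = {..m} \<union> {m+1..n}" using assms by auto
  then have "partial_sum f n = partial_sum f m + (\<Sum>j\<in>{m+1..n}. f j)"
    unfolding partial_sum_def by (simp add: sum.union_disjoint)
  then show ?thesis by simp
qed

lemma lI_eq_partial_sums:
  "lI \<alpha> a b f = (\<Sum>k\<in>{a..b}. \<Sum>n\<in>{a..b}-{k}.
     (cmod (\<alpha> k))\<^sup>2 * (cmod (\<alpha> n))\<^sup>2 * (cmod (partial_sum f k - partial_sum f n))\<^sup>2)"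
proof -
  have "cmod (\<Sum>j\<in>{min k n + 1..max k n}. f j) = cmod (partial_sum f k - partial_sum f n)" for k n
    using sum_between_eq_partial_sum_diff[of k n f] sum_between_eq_partial_sum_diff[of n k f]
    by (cases "k \<le> n") (simp_all add: norm_minus_commute)
  then show ?thesis
    unfolding lI_def by (simp add: norm_mult power_mult_distrib)
qed

lemma norm_diff_sq_le: "(norm (x - y))\<^sup>2 \<le> 2 * (norm x)\<^sup>2 + 2 * (norm y)\<^sup>2"
proof -
  have "(norm (x - y))\<^sup>2 \<le> (norm x + norm y)\<^sup>2"
    by (intro power_mono norm_triangle_ineq4) simp
  also have "\<dots> \<le> 2 * (norm x)\<^sup>2 + 2 * (norm y)\<^sup>2"
    using zero_le_power2[of "norm x - norm y"] by (simp add: power2_eq_square algebra_simps)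
  finally show ?thesis .
qed

lemma lI_cong:
  assumes "\<And>j. j \<in> {a..b} \<Longrightarrow> f j = g j"
  shows "lI \<alpha> a b f = lI \<alpha> a b g"
proof -
  have "(\<Sum>j\<in>{min k n + 1..max k n}. f j) = (\<Sum>j\<in>{min k n + 1..max k n}. g j)"
    if "k \<in> {a..b}" "n \<in> {a..b}" for k n
    using that by (intro sum.cong refl assms) (auto simp: min_def max_def split: if_splits)
  then show ?thesis
    unfolding lI_def by (intro sum.cong refl) auto
qed

lemma lI_scale: "lI \<alpha> a b (\<lambda>j. c * f j) = (cmod c)\<^sup>2 * lI \<alpha> a b f"
  unfolding lI_def
  by (simp add: norm_mult power_mult_distrib algebra_simps flip: sum_distrib_left)

lemma lI_vanishing: "\<forall>k\<in>{a..b}. \<alpha> k = 0 \<Longrightarrow> lI \<alpha> a b f = 0"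
  unfolding lI_def by simp

lemma mu_nonneg: "0 \<le> mu \<alpha> a b"
  unfolding mu_def by (intro sum_nonneg) auto

lemma mu_pos:
  assumes "\<not> (\<forall>k\<in>{a..b}. \<alpha> k = 0)"
  shows "0 < mu \<alpha> a b"
proof -
  obtain k where "k \<in> {a..b}" "\<alpha> k \<noteq> 0" using assms by blast
  then have "0 < (cmod (\<alpha> k))\<^sup>2" "(cmod (\<alpha> k))\<^sup>2 \<le> mu \<alpha> a b"
    unfolding mu_def by (auto intro: member_le_sum)
  then show ?thesis by linarith
qed

lemma norm2I_nonneg: "0 \<le> norm2I a b f"
  unfolding norm2I_def by (simp add: sum_nonneg)

lemma norm2I_sq: "(norm2I a b f)\<^sup>2 = (\<Sum>k\<in>{a..b}. (cmod (f k))\<^sup>2)"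
  unfolding norm2I_def by (simp add: sum_nonneg)

lemma norm2I_cong: "(\<And>j. j \<in> {a..b} \<Longrightarrow> f j = g j) \<Longrightarrow> norm2I a b f = norm2I a b g"
  unfolding norm2I_def by simp

lemma norm2I_scale: "norm2I a b (\<lambda>j. c * f j) = cmod c * norm2I a b f"
  unfolding norm2I_def
  by (simp add: norm_mult power_mult_distrib real_sqrt_mult flip: sum_distrib_left)

lemma norm_le_one_if_norm2I_le_one:
  assumes "norm2I a b f \<le> 1" "j \<in> {a..b}"
  shows "cmod (f j) \<le> 1"
proof -
  have "(cmod (f j))\<^sup>2 \<le> (norm2I a b f)\<^sup>2"
    unfolding norm2I_sq using assms(2) by (intro member_le_sum) auto
  also have "\<dots> \<le> 1"
    using power_le_one[OF norm2I_nonneg assms(1)] .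
  finally show ?thesis by (simp add: power_le_one_iff)
qed

definition Lfin_ratios :: "(nat \<Rightarrow> complex) \<Rightarrow> nat \<Rightarrow> nat \<Rightarrow> real set" where
  "Lfin_ratios \<alpha> a b = {lI \<alpha> a b f / mu \<alpha> a b | f.
     (\<forall>k. k \<notin> {a..b} \<longrightarrow> f k = 0) \<and> norm2I a b f \<le> 1}"

lemma Lfin_eq_sqrt_Sup:
  "\<not> (\<forall>k\<in>{a..b}. \<alpha> k = 0) \<Longrightarrow> Lfin \<alpha> a b = sqrt (Sup (Lfin_ratios \<alpha> a b))"
  unfolding Lfin_def Lfin_ratios_def by (rule if_not_P)

lemma zero_in_Lfin_ratios: "0 \<in> Lfin_ratios \<alpha> a b"
proof -
  have "lI \<alpha> a b (\<lambda>_. 0) = 0" "norm2I a b (\<lambda>_. 0) = 0"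
    by (simp_all add: lI_def norm2I_def)
  then show ?thesis
    unfolding Lfin_ratios_def by (auto intro!: exI[of _ "\<lambda>_. 0"])
qed

lemma bdd_above_Lfin_ratios: "bdd_above (Lfin_ratios \<alpha> a b)"
proof -
  define M where "M = (\<Sum>k\<in>{a..b}. \<Sum>n\<in>{a..b}-{k}. (cmod (\<alpha> k) * cmod (\<alpha> n) * (b + 1))\<^sup>2)"
  have "lI \<alpha> a b f \<le> M" if "norm2I a b f \<le> 1" for f
    unfolding lI_def M_def
  proof (intro sum_mono)
    fix k n assume "k \<in> {a..b}" "n \<in> {a..b} - {k}"
    then have sub: "{min k n + 1..max k n} \<subseteq> {a..b}" and "max k n \<le> b" by auto
    from sub have "cmod (\<Sum>j\<in>{min k n + 1..max k n}. f j) \<le> card {min k n + 1..max k n}"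
      using norm_le_one_if_norm2I_le_one[OF that]
      by (intro order_trans[OF norm_sum] sum_bounded_above[where K = 1, simplified]) auto
    also have "\<dots> \<le> b + 1" using \<open>max k n \<le> b\<close> by (auto simp: max_def min_def)
    finally show "(cmod (\<alpha> k * \<alpha> n * (\<Sum>j\<in>{min k n + 1..max k n}. f j)))\<^sup>2
        \<le> (cmod (\<alpha> k) * cmod (\<alpha> n) * (b + 1))\<^sup>2"
      unfolding norm_mult by (intro power_mono mult_left_mono) auto
  qed
  then show ?thesis
    unfolding Lfin_ratios_def by (intro bdd_aboveI[of _ "M / mu \<alpha> a b"]) (auto intro: divide_right_mono mu_nonneg)
qed

lemma Lfin_nonneg: "0 \<le> Lfin \<alpha> a b"
  using cSup_upper[OF zero_in_Lfin_ratios bdd_above_Lfin_ratios] Lfin_eq_sqrt_Sup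
  by (cases "\<forall>k\<in>{a..b}. \<alpha> k = 0") (auto simp: Lfin_def)

lemma lI_le_Lfin_sq: "lI \<alpha> a b f \<le> (Lfin \<alpha> a b)\<^sup>2 * mu \<alpha> a b * (norm2I a b f)\<^sup>2"
proof (cases "\<forall>k\<in>{a..b}. \<alpha> k = 0")
  case True
  then show ?thesis by (simp add: lI_vanishing mu_nonneg)
next
  case nonvanishing: False
  define g where "g j = (if j \<in> {a..b} then f j else 0)" for j
  define s where "s = norm2I a b g"
  have lI_g: "lI \<alpha> a b f = lI \<alpha> a b g" and s_f: "norm2I a b f = s"
    unfolding s_def g_def by (auto intro: lI_cong norm2I_cong)
  show ?thesis
  proof (cases "s = 0")
    case True
    then have "g j = 0" if "j \<in> {a..b}" for j
      using that by (auto simp: s_def norm2I_def sum_nonneg_eq_0_iff)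
    then have "lI \<alpha> a b g = lI \<alpha> a b (\<lambda>_. 0)" by (intro lI_cong) simp
    also have "\<dots> = 0" by (simp add: lI_def)
    finally show ?thesis by (simp add: lI_g s_f True)
  next
    case False
    then have s_pos: "0 < s" using norm2I_nonneg[of a b g] by (simp add: s_def)
    define h where "h = (\<lambda>j. complex_of_real (1 / s) * g j)"
    have "norm2I a b h = 1"
      unfolding h_def norm2I_scale using s_pos by (simp add: s_def norm_divide)
    moreover have "\<forall>k. k \<notin> {a..b} \<longrightarrow> h k = 0"
      by (simp add: h_def g_def)
    ultimately have "lI \<alpha> a b h / mu \<alpha> a b \<in> Lfin_ratios \<alpha> a b"
      unfolding Lfin_ratios_def by fastforce
    then have "lI \<alpha> a b h / mu \<alpha> a b \<le> Sup (Lfin_ratios \<alpha> a b)"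
      by (rule cSup_upper[OF _ bdd_above_Lfin_ratios])
    also have "\<dots> = (Lfin \<alpha> a b)\<^sup>2"
      using Lfin_eq_sqrt_Sup[OF nonvanishing] cSup_upper[OF zero_in_Lfin_ratios bdd_above_Lfin_ratios]
      by simp
    finally have "lI \<alpha> a b h / mu \<alpha> a b \<le> (Lfin \<alpha> a b)\<^sup>2" .
    moreover have "lI \<alpha> a b h = lI \<alpha> a b g / s\<^sup>2"
      unfolding h_def lI_scale using s_pos by (simp add: norm_divide power_divide)
    ultimately show ?thesis
      using s_pos mu_pos[OF nonvanishing] by (simp add: lI_g s_f field_simps)
  qed
qed

lemma Lfin_le:
  assumes "0 \<le> c"
    and "\<And>f. \<forall>k. k \<notin> {a..b} \<longrightarrow> f k = 0 \<Longrightarrow> norm2I a b f \<le> 1 \<Longrightarrow> lI \<alpha> a b f \<le> c\<^sup>2 * mu \<alpha> a b"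
  shows "Lfin \<alpha> a b \<le> c"
proof (cases "\<forall>k\<in>{a..b}. \<alpha> k = 0")
  case True
  then show ?thesis using assms(1) by (simp add: Lfin_def)
next
  case False
  have "Sup (Lfin_ratios \<alpha> a b) \<le> c\<^sup>2"
  proof (rule cSup_least)
    show "Lfin_ratios \<alpha> a b \<noteq> {}" using zero_in_Lfin_ratios by blast
    fix x assume "x \<in> Lfin_ratios \<alpha> a b"
    then show "x \<le> c\<^sup>2"
      using assms(2) mu_pos[OF False] by (auto simp: Lfin_ratios_def pos_divide_le_eq)
  qed
  then show ?thesis
    using Lfin_eq_sqrt_Sup[OF False] assms(1) real_sqrt_le_mono by fastforce
qed

lemma l2norm_sq: "in_l2 f \<Longrightarrow> (l2norm f)\<^sup>2 = (\<Sum>k. (cmod (f k))\<^sup>2)"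
  unfolding in_l2_def l2norm_def by (simp add: suminf_nonneg)

lemma l2norm_nonneg: "in_l2 f \<Longrightarrow> 0 \<le> l2norm f"
  unfolding in_l2_def l2norm_def by (simp add: suminf_nonneg)

lemma l2_bound_iff_partial_sums:
  assumes "in_l2 f" "0 \<le> C"
  shows "in_l2 g \<and> l2norm g \<le> C * l2norm f
    \<longleftrightarrow> (\<forall>N. (\<Sum>k<N. (cmod (g k))\<^sup>2) \<le> C\<^sup>2 * (\<Sum>k. (cmod (f k))\<^sup>2))"
    (is "?bounded \<longleftrightarrow> (\<forall>N. ?partial N)")
proof
  assume bounded: ?bounded
  show "\<forall>N. ?partial N"
  proof
    fix N
    have "(\<Sum>k<N. (cmod (g k))\<^sup>2) \<le> (l2norm g)\<^sup>2"
      using bounded by (simp add: l2norm_sq in_l2_def sum_le_suminf)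
    also have "\<dots> \<le> (C * l2norm f)\<^sup>2"
      using bounded l2norm_nonneg by (intro power_mono) auto
    finally show "?partial N"
      using assms by (simp add: power_mult_distrib l2norm_sq)
  qed
next
  assume partial: "\<forall>N. ?partial N"
  have summable: "in_l2 g"
    unfolding in_l2_def
  proof (rule bounded_imp_summable)
    fix n
    show "(\<Sum>k\<le>n. (cmod (g k))\<^sup>2) \<le> C\<^sup>2 * (\<Sum>k. (cmod (f k))\<^sup>2)"
      using partial lessThan_Suc_atMost by metis
  qed simp
  then have "(l2norm g)\<^sup>2 \<le> (C * l2norm f)\<^sup>2"
    using partial assms by (simp add: l2norm_sq power_mult_distrib in_l2_def suminf_le_const)
  then show ?bounded
    using summable assms l2norm_nonneg by (auto intro: power2_le_imp_le)
qed

lemma Rop_bounded_iff_partial_sums: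
  "Rop_bounded \<alpha> \<longleftrightarrow> (\<exists>C\<ge>0. \<forall>f N. in_l2 f \<longrightarrow>
     (\<Sum>k<N. (cmod (Rop \<alpha> f k))\<^sup>2) \<le> C\<^sup>2 * (\<Sum>k. (cmod (f k))\<^sup>2))"
proof -
  have "Rop_bounded \<alpha> \<longleftrightarrow> (\<exists>C\<ge>0. \<forall>f. in_l2 f \<longrightarrow>
      in_l2 (Rop \<alpha> f) \<and> l2norm (Rop \<alpha> f) \<le> C * l2norm f)"
  proof
    assume "Rop_bounded \<alpha>"
    then obtain C where C: "\<forall>f. in_l2 f \<longrightarrow> in_l2 (Rop \<alpha> f) \<and> l2norm (Rop \<alpha> f) \<le> C * l2norm f"
      unfolding Rop_bounded_def by blast
    have "C * l2norm f \<le> max C 0 * l2norm f" if "in_l2 f" for f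
      using l2norm_nonneg[OF that] by (intro mult_right_mono) auto
    with C show "\<exists>C\<ge>0. \<forall>f. in_l2 f \<longrightarrow> in_l2 (Rop \<alpha> f) \<and> l2norm (Rop \<alpha> f) \<le> C * l2norm f"
      by (intro exI[of _ "max C 0"]) (auto intro: order_trans)
  qed (auto simp: Rop_bounded_def)
  also have "\<dots> \<longleftrightarrow> (\<exists>C\<ge>0. \<forall>f N. in_l2 f \<longrightarrow>
      (\<Sum>k<N. (cmod (Rop \<alpha> f k))\<^sup>2) \<le> C\<^sup>2 * (\<Sum>k. (cmod (f k))\<^sup>2))"
    using l2_bound_iff_partial_sums[where g = "Rop \<alpha> _"] by (intro ex_cong1 conj_cong refl) blast
  finally show ?thesis .
qed

lemma
  assumes "\<forall>k. k \<notin> {a..b} \<longrightarrow> f k = 0"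
  shows in_l2_finite_support: "in_l2 f"
    and suminf_finite_support: "(\<Sum>k. (cmod (f k))\<^sup>2) = (norm2I a b f)\<^sup>2"
proof -
  have "(\<lambda>k. (cmod (f k))\<^sup>2) sums (\<Sum>k\<in>{a..b}. (cmod (f k))\<^sup>2)"
    using assms by (intro sums_finite) auto
  then show "in_l2 f" "(\<Sum>k. (cmod (f k))\<^sup>2) = (norm2I a b f)\<^sup>2"
    unfolding in_l2_def norm2I_sq by (simp_all add: sums_iff)
qed

lemma sum_offdiag_weighted_norm_diff_sq_le:
  fixes w :: "'a \<Rightarrow> real" and S :: "'a \<Rightarrow> 'b::real_normed_vector"
  assumes "finite I" "\<And>k. k \<in> I \<Longrightarrow> 0 \<le> w k"
  shows "(\<Sum>k\<in>I. \<Sum>n\<in>I-{k}. w k * w n * (norm (S k - S n))\<^sup>2)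
    \<le> 4 * (\<Sum>k\<in>I. w k) * (\<Sum>k\<in>I. w k * (norm (S k))\<^sup>2)"
proof -
  let ?bound = "\<lambda>k n. w k * w n * (2 * (norm (S k))\<^sup>2 + 2 * (norm (S n))\<^sup>2)"
  have "(\<Sum>n\<in>I-{k}. w k * w n * (norm (S k - S n))\<^sup>2) \<le> (\<Sum>n\<in>I. ?bound k n)" if "k \<in> I" for k
  proof -
    have "(\<Sum>n\<in>I-{k}. w k * w n * (norm (S k - S n))\<^sup>2) \<le> (\<Sum>n\<in>I-{k}. ?bound k n)"
      using that assms(2) by (intro sum_mono mult_left_mono norm_diff_sq_le) auto
    also have "\<dots> \<le> (\<Sum>n\<in>I. ?bound k n)"
      using that assms by (intro sum_mono2) auto
    finally show ?thesis .
  qed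
  then have "(\<Sum>k\<in>I. \<Sum>n\<in>I-{k}. w k * w n * (norm (S k - S n))\<^sup>2) \<le> (\<Sum>k\<in>I. \<Sum>n\<in>I. ?bound k n)"
    by (rule sum_mono)
  also have "\<dots> = (\<Sum>k\<in>I. 2 * (w k * (norm (S k))\<^sup>2) * (\<Sum>n\<in>I. w n)
      + 2 * w k * (\<Sum>n\<in>I. w n * (norm (S n))\<^sup>2))"
  proof -
    have "?bound k n = 2 * (w k * (norm (S k))\<^sup>2) * w n + 2 * w k * (w n * (norm (S n))\<^sup>2)" for k n
      by (simp add: algebra_simps)
    then show ?thesis
      by (simp only: sum.distrib sum_distrib_left[symmetric])
  qed
  also have "\<dots> = 4 * (\<Sum>k\<in>I. w k) * (\<Sum>k\<in>I. w k * (norm (S k))\<^sup>2)"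
    by (simp only: sum.distrib sum_distrib_left[symmetric] sum_distrib_right[symmetric]) simp
  finally show ?thesis .
qed

lemma Lfin_le_if_Rop_partial_sums_bounded:
  assumes "0 \<le> C"
    and bound: "\<And>f N. in_l2 f \<Longrightarrow> (\<Sum>k<N. (cmod (Rop \<alpha> f k))\<^sup>2) \<le> C\<^sup>2 * (\<Sum>k. (cmod (f k))\<^sup>2)"
  shows "Lfin \<alpha> a b \<le> 2 * C"
proof (rule Lfin_le)
  fix f assume supp: "\<forall>k. k \<notin> {a..b} \<longrightarrow> f k = 0" and norm: "norm2I a b f \<le> 1"
  have "(\<Sum>k\<in>{a..b}. (cmod (Rop \<alpha> f k))\<^sup>2) \<le> (\<Sum>k<Suc b. (cmod (Rop \<alpha> f k))\<^sup>2)"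
    by (intro sum_mono2) auto
  also have "\<dots> \<le> C\<^sup>2 * (norm2I a b f)\<^sup>2"
    using bound[OF in_l2_finite_support[OF supp]] suminf_finite_support[OF supp]
    by (simp del: sum.lessThan_Suc)
  also have "\<dots> \<le> C\<^sup>2"
    using power_le_one[OF norm2I_nonneg norm] by (simp add: mult_left_le)
  finally have Rop_bound: "(\<Sum>k\<in>{a..b}. (cmod (Rop \<alpha> f k))\<^sup>2) \<le> C\<^sup>2" .
  have "lI \<alpha> a b f \<le> 4 * mu \<alpha> a b * (\<Sum>k\<in>{a..b}. (cmod (Rop \<alpha> f k))\<^sup>2)"
    using sum_offdiag_weighted_norm_diff_sq_le[of "{a..b}" "\<lambda>k. (cmod (\<alpha> k))\<^sup>2" "partial_sum f"]
    unfolding lI_eq_partial_sums mu_def by (simp add: Rop_eq_partial_sum norm_mult power_mult_distrib)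
  also have "\<dots> \<le> 4 * mu \<alpha> a b * C\<^sup>2"
    using Rop_bound mu_nonneg[of \<alpha> a b] by (intro mult_left_mono) auto
  finally show "lI \<alpha> a b f \<le> (2 * C)\<^sup>2 * mu \<alpha> a b"
    by (simp add: algebra_simps power_mult_distrib)
qed (use assms in simp)

lemma Rop_bounded_imp_Lfin_bounded: "Rop_bounded \<alpha> \<Longrightarrow> \<exists>B. \<forall>a b. Lfin \<alpha> a b \<le> B"
  unfolding Rop_bounded_iff_partial_sums using Lfin_le_if_Rop_partial_sums_bounded by meson

lemma weighted_row_le_lI:
  assumes "m \<in> {a..b}"
  shows "(cmod (\<alpha> m))\<^sup>2 * (\<Sum>k\<in>{a..b}. (cmod (\<alpha> k))\<^sup>2 * (cmod (partial_sum f k - partial_sum f m))\<^sup>2)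
    \<le> lI \<alpha> a b f"
proof -
  let ?term = "\<lambda>k n. (cmod (\<alpha> k))\<^sup>2 * (cmod (\<alpha> n))\<^sup>2 * (cmod (partial_sum f k - partial_sum f n))\<^sup>2"
  have "(cmod (\<alpha> m))\<^sup>2 * (\<Sum>k\<in>{a..b}. (cmod (\<alpha> k))\<^sup>2 * (cmod (partial_sum f k - partial_sum f m))\<^sup>2)
      = (\<Sum>n\<in>{a..b}-{m}. ?term m n)"
    using assms
    by (simp add: sum.remove[of "{a..b}" m] sum_distrib_left norm_minus_commute algebra_simps)
  also have "\<dots> \<le> (\<Sum>k\<in>{a..b}. \<Sum>n\<in>{a..b}-{k}. ?term k n)"
    using assms by (intro member_le_sum[where f = "\<lambda>k. \<Sum>n\<in>{a..b}-{k}. ?term k n"] sum_nonneg) auto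
  finally show ?thesis
    unfolding lI_eq_partial_sums .
qed

lemma partial_sum_sq_le:
  assumes "in_l2 f"
  shows "(cmod (partial_sum f m))\<^sup>2 \<le> (real m + 1) * (\<Sum>k. (cmod (f k))\<^sup>2)"
proof -
  have "(cmod (partial_sum f m))\<^sup>2 \<le> (\<Sum>j\<le>m. cmod (f j))\<^sup>2"
    unfolding partial_sum_def by (intro power_mono norm_sum) auto
  also have "\<dots> \<le> (\<Sum>j\<le>m. (cmod (f j))\<^sup>2) * card {..m}"
    by (rule sum_squared_le_sum_of_squares)
  also have "\<dots> \<le> (\<Sum>k. (cmod (f k))\<^sup>2) * card {..m}"
    using assms unfolding in_l2_def by (intro mult_right_mono sum_le_suminf) auto
  finally show ?thesis by (simp add: mult.commute add.commute)
qed

lemma mu_le_suminf: "in_l2 \<alpha> \<Longrightarrow> mu \<alpha> a b \<le> (\<Sum>k. (cmod (\<alpha> k))\<^sup>2)"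
  unfolding mu_def in_l2_def by (intro sum_le_suminf) auto

lemma norm2I_sq_le_suminf: "in_l2 f \<Longrightarrow> (norm2I a b f)\<^sup>2 \<le> (\<Sum>k. (cmod (f k))\<^sup>2)"
  unfolding norm2I_sq in_l2_def by (intro sum_le_suminf) auto

lemma weighted_row_le_Lfin_bound:
  assumes "in_l2 \<alpha>" "in_l2 f" "m \<in> {a..b}" "Lfin \<alpha> a b \<le> B"
  shows "(cmod (\<alpha> m))\<^sup>2 * (\<Sum>k\<in>{a..b}. (cmod (\<alpha> k))\<^sup>2 * (cmod (partial_sum f k - partial_sum f m))\<^sup>2)
    \<le> B\<^sup>2 * (\<Sum>k. (cmod (\<alpha> k))\<^sup>2) * (\<Sum>k. (cmod (f k))\<^sup>2)"
proof -
  have "(cmod (\<alpha> m))\<^sup>2 * (\<Sum>k\<in>{a..b}. (cmod (\<alpha> k))\<^sup>2 * (cmod (partial_sum f k - partial_sum f m))\<^sup>2)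
      \<le> (Lfin \<alpha> a b)\<^sup>2 * mu \<alpha> a b * (norm2I a b f)\<^sup>2"
    using weighted_row_le_lI[OF assms(3)] lI_le_Lfin_sq by (rule order_trans)
  also have "\<dots> \<le> B\<^sup>2 * (\<Sum>k. (cmod (\<alpha> k))\<^sup>2) * (\<Sum>k. (cmod (f k))\<^sup>2)"
    using assms(4) Lfin_nonneg[of \<alpha> a b] mu_le_suminf[OF assms(1)] norm2I_sq_le_suminf[OF assms(2)]
      mu_nonneg[of \<alpha> a b] order_trans[OF mu_nonneg mu_le_suminf[OF assms(1)]]
    by (intro mult_mono power_mono) auto
  finally show ?thesis .
qed

lemma sum_Rop_sq_le:
  assumes "in_l2 \<alpha>" "in_l2 f" "\<alpha> m \<noteq> 0" "m \<le> b" "Lfin \<alpha> 0 b \<le> B"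
  shows "(\<Sum>k\<le>b. (cmod (Rop \<alpha> f k))\<^sup>2)
    \<le> 2 * (B\<^sup>2 / (cmod (\<alpha> m))\<^sup>2 + (real m + 1)) * (\<Sum>k. (cmod (\<alpha> k))\<^sup>2) * (\<Sum>k. (cmod (f k))\<^sup>2)"
proof -
  define A where "A = (\<Sum>k. (cmod (\<alpha> k))\<^sup>2)"
  define F where "F = (\<Sum>k. (cmod (f k))\<^sup>2)"
  define S where "S = partial_sum f"
  define w where "w k = (cmod (\<alpha> k))\<^sup>2" for k
  have row: "(\<Sum>k\<in>{0..b}. w k * (cmod (S k - S m))\<^sup>2) \<le> B\<^sup>2 * A * F / w m"
    using weighted_row_le_Lfin_bound[OF assms(1,2) _ assms(5)] assms(3,4)
    by (simp add: w_def S_def A_def F_def pos_le_divide_eq mult.commute)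
  have S_k: "(cmod (S k))\<^sup>2 \<le> 2 * (cmod (S k - S m))\<^sup>2 + 2 * (cmod (S m))\<^sup>2" for k
    using norm_diff_sq_le[of "S k - S m" "- S m"] by simp
  have "(\<Sum>k\<le>b. (cmod (Rop \<alpha> f k))\<^sup>2) = (\<Sum>k\<in>{0..b}. w k * (cmod (S k))\<^sup>2)"
    by (simp add: Rop_eq_partial_sum w_def S_def norm_mult power_mult_distrib atLeast0AtMost)
  also have "\<dots> \<le> (\<Sum>k\<in>{0..b}. w k * (2 * (cmod (S k - S m))\<^sup>2 + 2 * (cmod (S m))\<^sup>2))"
    using S_k by (intro sum_mono mult_left_mono) (auto simp: w_def)
  also have "\<dots> = 2 * (\<Sum>k\<in>{0..b}. w k * (cmod (S k - S m))\<^sup>2) + 2 * mu \<alpha> 0 b * (cmod (S m))\<^sup>2"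
    by (simp add: mu_def w_def algebra_simps sum.distrib sum_distrib_left sum_distrib_right)
  also have "\<dots> \<le> 2 * (B\<^sup>2 * A * F / w m) + 2 * (A * ((real m + 1) * F))"
  proof -
    have "mu \<alpha> 0 b * (cmod (S m))\<^sup>2 \<le> A * ((real m + 1) * F)"
      using mu_le_suminf[OF assms(1)] partial_sum_sq_le[OF assms(2)] mu_nonneg[of \<alpha> 0 b]
        order_trans[OF mu_nonneg mu_le_suminf[OF assms(1)]]
      unfolding A_def F_def S_def by (intro mult_mono) auto
    then show ?thesis
      using row by linarith
  qed
  also have "\<dots> = 2 * (B\<^sup>2 / (cmod (\<alpha> m))\<^sup>2 + (real m + 1)) * A * F"
    by (simp add: w_def algebra_simps)
  finally show ?thesis
    unfolding A_def F_def .
qed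

lemma Rop_bounded_if_Lfin_bounded:
  assumes "in_l2 \<alpha>" "\<And>b. Lfin \<alpha> 0 b \<le> B"
  shows "Rop_bounded \<alpha>"
proof (cases "\<forall>k. \<alpha> k = 0")
  case True
  then show ?thesis
    unfolding Rop_bounded_iff_partial_sums by (auto simp: Rop_def intro!: exI[of _ 0])
next
  case False
  then obtain m where m: "\<alpha> m \<noteq> 0" by blast
  define K where "K = 2 * (B\<^sup>2 / (cmod (\<alpha> m))\<^sup>2 + (real m + 1)) * (\<Sum>k. (cmod (\<alpha> k))\<^sup>2)"
  have K_nonneg: "0 \<le> K"
    using assms(1) unfolding K_def in_l2_def by (simp add: suminf_nonneg)
  have "(\<Sum>k<N. (cmod (Rop \<alpha> f k))\<^sup>2) \<le> (sqrt K)\<^sup>2 * (\<Sum>k. (cmod (f k))\<^sup>2)"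
    if "in_l2 f" for f N
  proof -
    have "(\<Sum>k<N. (cmod (Rop \<alpha> f k))\<^sup>2) \<le> (\<Sum>k\<le>max N m. (cmod (Rop \<alpha> f k))\<^sup>2)"
      by (intro sum_mono2) auto
    also have "\<dots> \<le> K * (\<Sum>k. (cmod (f k))\<^sup>2)"
      using sum_Rop_sq_le[OF assms(1) that m _ assms(2)] unfolding K_def by simp
    finally show ?thesis
      using K_nonneg by simp
  qed
  then show ?thesis
    unfolding Rop_bounded_iff_partial_sums using K_nonneg by (intro exI[of _ "sqrt K"]) auto
qed

lemma Linf_less_infinity_iff: "Linf \<alpha> a < \<infinity> \<longleftrightarrow> (\<exists>B. \<forall>b\<ge>a. Lfin \<alpha> a b \<le> B)"
proof
  assume finite: "Linf \<alpha> a < \<infinity>"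
  have upper: "ereal (Lfin \<alpha> a b) \<le> Linf \<alpha> a" if "a \<le> b" for b
    unfolding Linf_def using that by (intro SUP_upper) auto
  then have "Linf \<alpha> a \<noteq> -\<infinity>"
    by (metis MInfty_neq_ereal(2) ereal_infty_less_eq(2) order_refl)
  with finite obtain r where "Linf \<alpha> a = ereal r"
    by (cases "Linf \<alpha> a") auto
  with upper show "\<exists>B. \<forall>b\<ge>a. Lfin \<alpha> a b \<le> B"
    by auto
next
  assume "\<exists>B. \<forall>b\<ge>a. Lfin \<alpha> a b \<le> B"
  then obtain B where "\<forall>b\<ge>a. Lfin \<alpha> a b \<le> B" by blast
  then have "Linf \<alpha> a \<le> ereal B"
    unfolding Linf_def by (intro SUP_least) auto
  then show "Linf \<alpha> a < \<infinity>"
    using order.strict_trans1 by fastforce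
qed

lemma epsL_length_0_iff: "epsL_length \<alpha> \<epsilon> 0 \<longleftrightarrow> (\<forall>b. Lfin \<alpha> 0 b \<le> \<epsilon>)"
proof -
  have "epsL_length \<alpha> \<epsilon> 0 \<longleftrightarrow> \<not> (\<exists>t>0. \<epsilon> < Lfin \<alpha> 0 (t - 1))"
    unfolding epsL_length_def by (simp add: zero_enat_def)
  also have "\<dots> \<longleftrightarrow> \<not> (\<exists>b. \<epsilon> < Lfin \<alpha> 0 b)"
  proof -
    have "(\<exists>t>0. \<epsilon> < Lfin \<alpha> 0 (t - 1)) \<longleftrightarrow> (\<exists>b. \<epsilon> < Lfin \<alpha> 0 b)"
      by (metis diff_Suc_1 zero_less_Suc)
    then show ?thesis by simp
  qed
  finally show ?thesis
    by (simp add: not_less)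
qed

theorem theorem4p4:
  fixes \<alpha> :: "nat \<Rightarrow> complex"
  assumes "in_l2 \<alpha>"
  shows "(Rop_bounded \<alpha> \<longleftrightarrow> Linf \<alpha> 0 < \<infinity>)
       \<and> (Linf \<alpha> 0 < \<infinity> \<longleftrightarrow> (\<exists>\<epsilon>>0. epsL_length \<alpha> \<epsilon> 0))"
proof -
  have "Rop_bounded \<alpha> \<longleftrightarrow> (\<exists>B. \<forall>b. Lfin \<alpha> 0 b \<le> B)"
    using Rop_bounded_imp_Lfin_bounded Rop_bounded_if_Lfin_bounded[OF assms] by blast
  moreover have "(\<exists>B. \<forall>b. Lfin \<alpha> 0 b \<le> B) \<longleftrightarrow> (\<exists>\<epsilon>>0. \<forall>b. Lfin \<alpha> 0 b \<le> \<epsilon>)"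
  proof
    assume "\<exists>B. \<forall>b. Lfin \<alpha> 0 b \<le> B"
    then obtain B where "\<forall>b. Lfin \<alpha> 0 b \<le> B" by blast
    then show "\<exists>\<epsilon>>0. \<forall>b. Lfin \<alpha> 0 b \<le> \<epsilon>"
      by (intro exI[of _ "max B 1"]) (auto intro: le_max_iff_disj[THEN iffD2])
  qed blast
  ultimately show ?thesis
    unfolding Linf_less_infinity_iff epsL_length_0_iff by simp
qed

end
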